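(* Let $q$ be a prime power, let $m, c, h, M$ be positive integers with $c < \frac{m-1}{m}M$, and let $r : \mathbb{F}_q \to \mathbb{F}_q$ be a function. Suppose $F_1(X), \ldots, F_m(X) \in \mathbb{F}_q[X]$ satisfy $\deg(F_i) < cq$ and are all $r$-twisted $(h,M)$-pseudopolynomials. Let $k$ be an integer with $$k > \frac{M}{(m-1)M - mc}\cdot (h+1).$$ Then there exist $k$-pseudopolynomials $A_1(X), \ldots, A_m(X) \in \mathbb{F}_q[X]$ with $\deg(A_i) < Mq$, not all zero, such that $$\sum_{i=1}^m A_i(X) F_i(X) = 0.$$
   Context: For $A(X) \in \mathbb{F}_q[X]$, $A^{[\ell]}(X)$ is the $\ell$-th Hasse derivative (the coefficient of $Z^\ell$ in $A(X+Z)$ expanded in powers of $Z$). With $\Lambda(X) = X^q - X$, the $\ell$-th pseudoderivative is $A_{\langle \ell \rangle}(X) = A^{[\ell]}(X) \bmod \Lambda(X)$. The pseudodegree is $\mathsf{pdeg}(A) = \max_{\ell \geq 0}\deg(A_{\langle\ell\rangle})$, and $A$ is a $k$-pseudopolynomial if $\mathsf{pdeg}(A) \leq k$. Given $r : \mathbb{F}_q \to \mathbb{F}_q$, a polynomial $F(X)$ is an $r$-twisted $(h,M)$-pseudopolynomial if for every $\ell$ with $0 \leq \ell < M$ there is $U_\ell(X) \in \mathbb{F}_q[X]$ of degree at most $h$ with $F^{[\ell]}(\alpha) = r(\alpha)\cdot U_\ell(\alpha)$ for all $\alpha \in \mathbb{F}_q$. *)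

theory Defs
  imports "HOL-Library.Cardinality" "HOL-Computational_Algebra.Polynomial" "HOL-Computational_Algebra.Polynomial_Factorial" Complex_Main
begin

(* l-th Hasse derivative: coefficient of Z^l in A(X+Z), computed in (F_q[X])[Z] *)
definition hasse_deriv :: "nat \<Rightarrow> 'a::comm_ring_1 poly \<Rightarrow> 'a poly" where
  "hasse_deriv l A = coeff (pcompose (map_poly (\<lambda>c. [:c:]) A) [:[:0, 1:], 1:]) l"

definition Lam :: "'a::{finite,field} poly" where
  "Lam = monom 1 (CARD('a)) - [:0, 1:]"

definition pseudo_deriv :: "nat \<Rightarrow> 'a::{finite,field} poly \<Rightarrow> 'a poly" where
  "pseudo_deriv l A = hasse_deriv l A mod Lam"

definition pdeg :: "'a::{finite,field} poly \<Rightarrow> nat" where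
  "pdeg A = Max (range (\<lambda>l. degree (pseudo_deriv l A)))"

definition is_pseudopoly :: "nat \<Rightarrow> 'a::{finite,field} poly \<Rightarrow> bool" where
  "is_pseudopoly k A \<longleftrightarrow> pdeg A \<le> k"

definition twisted_pseudopoly ::
  "('a::{finite,field} \<Rightarrow> 'a) \<Rightarrow> nat \<Rightarrow> nat \<Rightarrow> 'a poly \<Rightarrow> bool" where
  "twisted_pseudopoly r h M F \<longleftrightarrow>
     (\<forall>l < M. \<exists>U. degree U \<le> h \<and> (\<forall>\<alpha>. poly (hasse_deriv l F) \<alpha> = r \<alpha> * poly U \<alpha>))"

end

(*
  Expand each multiplier in powers of Lam = X^q - X,
    A_i = sum_{j<N} Lam^j R_ij  with  N = M - c  and digits  deg R_ij <= e = min k (q - 1).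
  Since Lam(X + a) = Lam(X), a Hasse derivative of A_i evaluated at a only differentiates the digits,
  so A_i is an e-pseudopolynomial; and deg A_i < N q.  By the Leibniz rule and the twisted hypothesis,
  the l-th Hasse derivative of G = sum_i A_i F_i at a equals r(a) Q_l(a), where
  Q_l = sum_i sum_{t<=l} (A_i)_<t> U_{i,l-t} has degree at most e + h.
  There are q^((e+1) m N) choices of digits but at most q^(M min(e+h+1, q)) tuples (Q_l)_{l<M} of
  polynomial functions, and the hypotheses on c and k imply that the former number is larger.
  Two choices with the same tuple differ by nonzero digits for which all Hasse derivatives of G of
  order < M vanish on F_q; thus every point is a root of G of multiplicity at least M, and since
  deg G < (N + c) q = M q, G = 0.
*)

theory Submission
  imports Defs "HOL-Library.FuncSet"
begin

section \<open>Hasse derivatives\<close>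

lemma pcompose_power: "pcompose (p ^ n) q = pcompose p q ^ n"
  by (induction n) (simp_all add: pcompose_1 pcompose_mult)

lemma pcompose_monom: "pcompose (monom c n) q = smult c (q ^ n)"
  by (simp add: pcompose_altdef map_poly_monom poly_monom)

lemma coeff_linear_power_binomial:
  "coeff ([:a, 1:] ^ n) l = of_nat (n choose l) * (a :: 'a::comm_semiring_1) ^ (n - l)"
proof (cases "l \<le> n")
  case True
  then show ?thesis by (simp add: coeff_linear_poly_power)
next
  case False
  then show ?thesis by (simp add: coeff_eq_0 degree_linear_power binomial_eq_0)
qed

lemma map_poly_const_add:
  fixes p q :: "'a::comm_ring_1 poly"
  shows "map_poly (\<lambda>c. [:c:]) (p + q) = map_poly (\<lambda>c. [:c:]) p + map_poly (\<lambda>c. [:c:]) q"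
  by (rule poly_eqI) (simp add: coeff_map_poly)

lemma map_poly_const_diff:
  fixes p q :: "'a::comm_ring_1 poly"
  shows "map_poly (\<lambda>c. [:c:]) (p - q) = map_poly (\<lambda>c. [:c:]) p - map_poly (\<lambda>c. [:c:]) q"
  by (rule poly_eqI) (simp add: coeff_map_poly)

lemma map_poly_const_mult:
  fixes p q :: "'a::comm_ring_1 poly"
  shows "map_poly (\<lambda>c. [:c:]) (p * q) = map_poly (\<lambda>c. [:c:]) p * map_poly (\<lambda>c. [:c:]) q"
  by (rule poly_eqI) (simp add: coeff_map_poly coeff_mult mult.commute flip: sum_to_poly)

lemma hasse_deriv_0 [simp]: "hasse_deriv l 0 = 0"
  by (simp add: hasse_deriv_def)

lemma hasse_deriv_add: "hasse_deriv l (A + B) = hasse_deriv l A + hasse_deriv l B"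
  by (simp add: hasse_deriv_def map_poly_const_add pcompose_add)

lemma hasse_deriv_diff: "hasse_deriv l (A - B) = hasse_deriv l A - hasse_deriv l B"
  by (simp add: hasse_deriv_def map_poly_const_diff pcompose_diff)

lemma hasse_deriv_sum: "hasse_deriv l (\<Sum>i\<in>I. A i) = (\<Sum>i\<in>I. hasse_deriv l (A i))"
  by (induction I rule: infinite_finite_induct) (simp_all add: hasse_deriv_add)

lemma hasse_deriv_mult: "hasse_deriv l (A * B) = (\<Sum>t\<le>l. hasse_deriv t A * hasse_deriv (l - t) B)"
  by (simp add: hasse_deriv_def map_poly_const_mult pcompose_mult coeff_mult)

lemma hasse_deriv_monom: "hasse_deriv l (monom c n) = monom (of_nat (n choose l) * c) (n - l)"
  by (simp add: hasse_deriv_def map_poly_monom pcompose_monom coeff_linear_power_binomial)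
    (simp add: monom_altdef of_nat_poly mult.commute)

lemma hasse_deriv_as_sum_of_monoms:
  "hasse_deriv l A = (\<Sum>i\<le>degree A. monom (of_nat (i choose l) * coeff A i) (i - l))"
proof -
  have "hasse_deriv l A = hasse_deriv l (\<Sum>i\<le>degree A. monom (coeff A i) i)"
    by (simp add: poly_as_sum_of_monoms)
  then show ?thesis by (simp add: hasse_deriv_sum hasse_deriv_monom)
qed

lemma degree_hasse_deriv_le: "degree (hasse_deriv l A) \<le> degree A"
  unfolding hasse_deriv_as_sum_of_monoms
  by (intro degree_sum_le order.trans[OF degree_monom_le]) auto

lemma poly_hasse_deriv: "poly (hasse_deriv l A) a = coeff (pcompose A [:a, 1:]) l"
proof -
  have "coeff (pcompose A [:a, 1:]) l = coeff (pcompose (\<Sum>i\<le>degree A. monom (coeff A i) i) [:a, 1:]) l"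
    by (simp add: poly_as_sum_of_monoms)
  then show ?thesis
    by (simp add: hasse_deriv_as_sum_of_monoms poly_sum poly_monom pcompose_sum coeff_sum
        pcompose_monom coeff_linear_power_binomial mult_ac)
qed

lemma linear_power_dvd_if_hasse_derivs_vanish:
  fixes G :: "'a::comm_ring_1 poly"
  assumes "\<And>l. l < M \<Longrightarrow> poly (hasse_deriv l G) a = 0"
  shows "[:-a, 1:] ^ M dvd G"
proof -
  have "monom 1 M dvd pcompose G [:a, 1:]"
    using assms by (simp add: monom_1_dvd_iff' poly_hasse_deriv)
  then obtain H where H: "pcompose G [:a, 1:] = monom 1 M * H" by (elim dvdE)
  have "G = pcompose (pcompose G [:a, 1:]) [:-a, 1:]"
    by (simp add: pcompose_pCons flip: pcompose_assoc)
  also have "\<dots> = [:-a, 1:] ^ M * pcompose H [:-a, 1:]"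
    by (simp add: H pcompose_mult pcompose_monom)
  finally show ?thesis by (metis dvd_triv_left)
qed

section \<open>Expansions in powers of a polynomial\<close>

lemma degree_sum_power_mult_less:
  fixes P :: "'a::idom poly"
  assumes digits: "\<And>j. j < N \<Longrightarrow> degree (R j) < degree P" and "N > 0"
  shows "degree (\<Sum>j<N. P ^ j * R j) < N * degree P"
proof (rule degree_sum_less)
  fix j assume "j \<in> {..<N}"
  then have "j < N" by simp
  have "degree (P ^ j * R j) \<le> j * degree P + degree (R j)"
    using degree_power_le[of P j] by (intro order.trans[OF degree_mult_le]) (simp add: mult.commute)
  also have "\<dots> < Suc j * degree P" using digits[OF \<open>j < N\<close>] by simp
  also have "\<dots> \<le> N * degree P" using \<open>j < N\<close> by (intro mult_le_mono1) simp
  finally show "degree (P ^ j * R j) < N * degree P" .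
qed (use digits[of 0] \<open>N > 0\<close> in simp)

lemma sum_power_mult_eq_0D:
  fixes P :: "'a::idom poly"
  assumes digits: "\<And>j. j < N \<Longrightarrow> degree (R j) < degree P"
    and "(\<Sum>j<N. P ^ j * R j) = 0" and "j < N"
  shows "R j = 0"
  using assms(2,3) digits
proof (induction N arbitrary: j)
  case 0
  then show ?case by simp
next
  case (Suc N)
  let ?S = "\<Sum>j<N. P ^ j * R j"
  have P0: "P \<noteq> 0" using Suc.prems(3)[of 0] by auto
  have top: "P ^ N * R N = - ?S" using Suc.prems(1) by (simp add: eq_neg_iff_add_eq_0 add.commute)
  have "R N = 0"
  proof (rule ccontr)
    assume "R N \<noteq> 0"
    then have "N > 0" using top by (cases N) auto
    then have "degree ?S < N * degree P"
      by (intro degree_sum_power_mult_less) (use Suc.prems(3) in auto)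
    moreover have "N * degree P \<le> degree (P ^ N * R N)"
      using \<open>R N \<noteq> 0\<close> P0 by (simp add: degree_mult_eq degree_power_eq)
    ultimately show False using top by simp
  qed
  then have "?S = 0" using top by simp
  then show ?case
    using Suc.IH Suc.prems \<open>R N = 0\<close> by (cases "j = N") auto
qed

section \<open>Polynomials over a finite field\<close>

lemma card_degree_le: "card {p :: 'a::{zero,finite} poly. degree p \<le> n} = CARD('a) ^ Suc n"
proof -
  have "bij_betw (\<lambda>p. restrict (coeff p) {..n}) {p :: 'a poly. degree p \<le> n}
      (PiE {..n} (\<lambda>_. UNIV))"
  proof (rule bij_betw_imageI)
    show "inj_on (\<lambda>p. restrict (coeff p) {..n}) {p :: 'a poly. degree p \<le> n}"
    proof (rule inj_onI)
      fix p q :: "'a poly"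
      assume p: "p \<in> {p. degree p \<le> n}" and q: "q \<in> {p. degree p \<le> n}"
        and eq: "restrict (coeff p) {..n} = restrict (coeff q) {..n}"
      show "p = q"
      proof (rule poly_eqI)
        fix i
        show "coeff p i = coeff q i"
        proof (cases "i \<le> n")
          case True
          then show ?thesis using fun_cong[OF eq, of i] by simp
        next
          case False
          then show ?thesis using p q by (simp add: coeff_eq_0)
        qed
      qed
    qed
    have "f \<in> (\<lambda>p. restrict (coeff p) {..n}) ` {p :: 'a poly. degree p \<le> n}"
      if "f \<in> PiE {..n} (\<lambda>_. UNIV)" for f
    proof
      let ?p = "Poly (map f [0..<Suc n])"
      show "f = restrict (coeff ?p) {..n}"
        using that by (auto simp: fun_eq_iff nth_default_def PiE_def extensional_def simp del: upt_Suc)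
      show "?p \<in> {p. degree p \<le> n}"
        by (auto intro!: degree_le simp: nth_default_def)
    qed
    moreover have "(\<lambda>p. restrict (coeff p) {..n}) ` {p :: 'a poly. degree p \<le> n} \<subseteq> PiE {..n} (\<lambda>_. UNIV)"
      by (intro image_subsetI) simp
    ultimately show
      "(\<lambda>p. restrict (coeff p) {..n}) ` {p :: 'a poly. degree p \<le> n} = PiE {..n} (\<lambda>_. UNIV)"
      by blast
  qed
  then show ?thesis by (simp add: bij_betw_same_card card_PiE)
qed

lemma finite_degree_le: "finite {p :: 'a::{zero,finite} poly. degree p \<le> n}"
  using card_degree_le[of n, where 'a = 'a] zero_less_card_finite[where 'a = 'a]
  by (intro card_ge_0_finite) simp

lemma card_poly_degree_le:
  "card (poly ` {p :: 'a::{comm_semiring_0,finite} poly. degree p \<le> n}) \<le> CARD('a) ^ min (Suc n) CARD('a)"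
proof -
  have "card (poly ` {p :: 'a poly. degree p \<le> n}) \<le> CARD('a) ^ Suc n"
    using card_image_le[OF finite_degree_le] card_degree_le by metis
  moreover have "card (poly ` {p :: 'a poly. degree p \<le> n}) \<le> CARD('a) ^ CARD('a)"
    using card_mono[of "UNIV :: ('a \<Rightarrow> 'a) set"] by (simp add: card_fun)
  ultimately show ?thesis by (simp add: min_def)
qed

lemma card_field_ge_2: "2 \<le> CARD('a::{finite,field})"
proof -
  have "card {0::'a, 1} \<le> CARD('a)" by (rule card_mono) auto
  then show ?thesis by simp
qed

lemma power_card_eq_self: "(x::'a::{finite,field}) ^ CARD('a) = x"
proof (cases "x = 0")
  case True
  then show ?thesis using card_field_ge_2[where 'a='a] by simp
next
  case False
  let ?U = "UNIV - {0::'a}"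
  have "(\<Prod>y\<in>?U. x * y) = (\<Prod>y\<in>?U. y)"
    by (rule prod.reindex_bij_witness[of _ "\<lambda>y. y / x" "\<lambda>y. x * y"]) (use False in auto)
  then have "x ^ card ?U = 1"
    by (simp add: prod.distrib)
  moreover have "CARD('a) = Suc (card ?U)"
    using card_field_ge_2[where 'a='a] by (simp add: card_Diff_subset)
  ultimately show ?thesis by (metis power_Suc mult_1_right)
qed

lemma hasse_derivs_vanish_imp_eq_0:
  fixes G :: "'a::{finite,field} poly"
  assumes "\<And>l a. l < M \<Longrightarrow> poly (hasse_deriv l G) a = 0"
    and "degree G < M * CARD('a)"
  shows "G = 0"
proof (rule ccontr)
  assume "G \<noteq> 0"
  have order: "M \<le> order a G" for a
    using linear_power_dvd_if_hasse_derivs_vanish[of M G a] assms(1) \<open>G \<noteq> 0\<close>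
    by (simp add: order_divides)
  have "M > 0" using assms(2) by (cases M) simp_all
  then have "poly G a = 0" for a
    using order[of a] \<open>G \<noteq> 0\<close> by (simp add: order_root)
  then have "{a. poly G a = 0} = UNIV" by auto
  then have "(\<Sum>a\<in>UNIV. order a G) \<le> degree G"
    using sum_order_le_degree[OF \<open>G \<noteq> 0\<close>] by simp
  moreover have "M * CARD('a) \<le> (\<Sum>a\<in>UNIV. order a G)"
    using sum_mono[of UNIV "\<lambda>_. M" "\<lambda>a. order a G"] order by (simp add: mult.commute)
  ultimately show False using assms(2) by simp
qed

lemma poly_Lam [simp]: "poly (Lam :: 'a::{finite,field} poly) a = 0"
  by (simp add: Lam_def poly_monom power_card_eq_self)

lemma degree_Lam: "degree (Lam :: 'a::{finite,field} poly) = CARD('a)"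
proof -
  have "degree [:0::'a, 1:] < degree (monom (1::'a) CARD('a))"
    using card_field_ge_2[where 'a='a] by (simp add: degree_monom_eq)
  then show ?thesis
    unfolding Lam_def using degree_add_eq_left[of "- [:0, 1:]" "monom (1::'a) CARD('a)"]
    by (simp add: degree_monom_eq del: pCons_0_0 minus_pCons)
qed

lemma Lam_neq_0: "(Lam :: 'a::{finite,field} poly) \<noteq> 0"
  using degree_Lam[where 'a='a] card_field_ge_2[where 'a='a] by auto

lemma lead_coeff_Lam: "lead_coeff (Lam :: 'a::{finite,field} poly) = 1"
proof -
  obtain n where "CARD('a) = Suc (Suc n)"
    using card_field_ge_2[where 'a='a] by (metis add_2_eq_Suc le_Suc_ex)
  then have "coeff (Lam :: 'a poly) CARD('a) = 1" by (simp add: Lam_def)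
  then show ?thesis by (simp add: degree_Lam)
qed

lemma pcompose_Lam_shift: "pcompose (Lam :: 'a::{finite,field} poly) [:a, 1:] = Lam"
proof (rule poly_eqI_degree_lead_coeff[where A = UNIV and n = "CARD('a)"])
  show "coeff (pcompose Lam [:a, 1:]) CARD('a) = coeff Lam CARD('a)"
    using lead_coeff_comp[of "[:a, 1:]" Lam] by (simp add: degree_pcompose degree_Lam lead_coeff_Lam)
qed (simp_all add: degree_pcompose degree_Lam poly_pcompose)

lemma poly_hasse_deriv_Lam_power:
  "poly (hasse_deriv t (Lam ^ j)) a = coeff ((Lam :: 'a::{finite,field} poly) ^ j) t"
  unfolding poly_hasse_deriv pcompose_power pcompose_Lam_shift ..

lemma poly_mod_Lam [simp]: "poly (P mod (Lam :: 'a::{finite,field} poly)) a = poly P a"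
proof -
  have "poly P a = poly (P div Lam * Lam + P mod Lam) a" by simp
  then show ?thesis by (simp only: poly_add poly_mult poly_Lam) simp
qed

lemma degree_mod_Lam_less: "degree (P mod (Lam :: 'a::{finite,field} poly)) < CARD('a)"
  using degree_mod_less[OF Lam_neq_0, of P] degree_Lam[where 'a='a] card_field_ge_2[where 'a='a]
  by auto

lemma degree_mod_Lam_le:
  fixes P R :: "'a::{finite,field} poly"
  assumes "\<And>a. poly P a = poly R a"
  shows "degree (P mod Lam) \<le> degree R"
proof -
  have "P mod Lam = R mod Lam"
    by (rule poly_eqI_degree[where A = UNIV]) (simp_all add: assms degree_mod_Lam_less)
  moreover have "degree (R mod Lam) \<le> degree R"
    using degree_mod_Lam_less[of R]
    by (cases "degree R < CARD('a)") (simp_all add: mod_poly_less degree_Lam)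
  ultimately show ?thesis by simp
qed

lemma poly_pseudo_deriv: "poly (pseudo_deriv l A) a = poly (hasse_deriv l A) a"
  by (simp add: pseudo_deriv_def)

lemma is_pseudopolyI:
  assumes "\<And>l. degree (pseudo_deriv l A) \<le> k"
  shows "is_pseudopoly k A"
  unfolding is_pseudopoly_def pdeg_def
  using assms by (intro Max.boundedI) (auto intro: finite_subset[of _ "{..k}"])

lemma degree_pseudo_deriv_Lam_expansion:
  fixes R :: "nat \<Rightarrow> 'a::{finite,field} poly"
  assumes "\<And>j. j < N \<Longrightarrow> degree (R j) \<le> e"
  shows "degree (pseudo_deriv l (\<Sum>j<N. Lam ^ j * R j)) \<le> e"
proof -
  let ?D = "\<Sum>j<N. \<Sum>t\<le>l. smult (coeff (Lam ^ j) t) (hasse_deriv (l - t) (R j))"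
  have "poly (hasse_deriv l (\<Sum>j<N. Lam ^ j * R j)) a = poly ?D a" for a
    by (simp add: hasse_deriv_sum hasse_deriv_mult poly_sum poly_hasse_deriv_Lam_power)
  then have "degree (pseudo_deriv l (\<Sum>j<N. Lam ^ j * R j)) \<le> degree ?D"
    unfolding pseudo_deriv_def by (rule degree_mod_Lam_le)
  also have "degree ?D \<le> e"
    by (intro degree_sum_le order.trans[OF degree_smult_le] order.trans[OF degree_hasse_deriv_le] assms)
      auto
  finally show ?thesis .
qed

lemma poly_hasse_deriv_sum_mult_twisted:
  assumes "\<And>i t a. i \<in> I \<Longrightarrow> t \<le> l \<Longrightarrow> poly (hasse_deriv t (F i)) a = r a * poly (U i t) a"
  shows "poly (hasse_deriv l (\<Sum>i\<in>I. A i * F i)) a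
    = r a * poly (\<Sum>i\<in>I. \<Sum>t\<le>l. pseudo_deriv t (A i) * U i (l - t)) a"
proof -
  have "poly (hasse_deriv l (\<Sum>i\<in>I. A i * F i)) a
      = (\<Sum>i\<in>I. \<Sum>t\<le>l. poly (pseudo_deriv t (A i)) a * poly (hasse_deriv (l - t) (F i)) a)"
    by (simp add: hasse_deriv_sum hasse_deriv_mult poly_sum poly_pseudo_deriv)
  also have "\<dots> = (\<Sum>i\<in>I. \<Sum>t\<le>l. poly (pseudo_deriv t (A i)) a * (r a * poly (U i (l - t)) a))"
    using assms by (intro sum.cong refl) simp
  also have "\<dots> = r a * poly (\<Sum>i\<in>I. \<Sum>t\<le>l. pseudo_deriv t (A i) * U i (l - t)) a"
    by (simp add: poly_sum sum_distrib_left mult_ac)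
  finally show ?thesis .
qed

section \<open>The annihilating combination\<close>

lemma card_PiE_poly_funs_less:
  assumes "finite J" and count: "M * min (e + h + 1) CARD('a) < card J * (e + 1)"
  shows "card (PiE {..<M} (\<lambda>_. poly ` {p :: 'a::{finite,field} poly. degree p \<le> e + h}))
    < card (PiE J (\<lambda>_. {p :: 'a poly. degree p \<le> e}))"
proof -
  have "card (PiE {..<M} (\<lambda>_. poly ` {p :: 'a poly. degree p \<le> e + h}))
      \<le> (CARD('a) ^ min (e + h + 1) CARD('a)) ^ M"
    using card_poly_degree_le[of "e + h", where 'a = 'a] by (simp add: card_PiE power_mono)
  also have "\<dots> < (CARD('a) ^ (e + 1)) ^ card J"
    unfolding power_mult[symmetric] using card_field_ge_2[where 'a = 'a] count
    by (intro power_strict_increasing) (simp_all add: mult_ac)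
  also have "\<dots> = card (PiE J (\<lambda>_. {p :: 'a poly. degree p \<le> e}))"
    using \<open>finite J\<close> by (simp add: card_PiE card_degree_le)
  finally show ?thesis .
qed

lemma exists_Lam_digits_annihilating:
  fixes F :: "'b \<Rightarrow> 'a::{finite,field} poly" and U :: "'b \<Rightarrow> nat \<Rightarrow> 'a poly"
  assumes "finite I"
    and twisted: "\<And>i l a. i \<in> I \<Longrightarrow> l < M \<Longrightarrow> poly (hasse_deriv l (F i)) a = r a * poly (U i l) a"
    and degree_U: "\<And>i l. i \<in> I \<Longrightarrow> l < M \<Longrightarrow> degree (U i l) \<le> h"
    and count: "M * min (e + h + 1) CARD('a) < card I * N * (e + 1)"
  shows "\<exists>R. (\<forall>i\<in>I. \<forall>j<N. degree (R (i, j)) \<le> e) \<and> (\<exists>i\<in>I. \<exists>j<N. R (i, j) \<noteq> 0)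
           \<and> (\<forall>l<M. \<forall>a. poly (hasse_deriv l (\<Sum>i\<in>I. (\<Sum>j<N. Lam ^ j * R (i, j)) * F i)) a = 0)"
proof -
  define A where "A R i = (\<Sum>j<N. Lam ^ j * R (i, j))" for R :: "'b \<times> nat \<Rightarrow> 'a poly" and i
  define Q where "Q R l = (\<Sum>i\<in>I. \<Sum>t\<le>l. pseudo_deriv t (A R i) * U i (l - t))" for R l
  define Dom where "Dom = PiE (I \<times> {..<N}) (\<lambda>_. {p :: 'a poly. degree p \<le> e})"
  define Cod where "Cod = PiE {..<M} (\<lambda>_. poly ` {p :: 'a poly. degree p \<le> e + h})"
  define Phi where "Phi R = restrict (\<lambda>l. poly (Q R l)) {..<M}" for R
  have hasse: "poly (hasse_deriv l (\<Sum>i\<in>I. A R i * F i)) a = r a * poly (Q R l) a" if "l < M" for R l a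
    unfolding Q_def by (rule poly_hasse_deriv_sum_mult_twisted) (use that twisted in auto)
  have "Phi ` Dom \<subseteq> Cod"
  proof -
    have "degree (Q R l) \<le> e + h" if "R \<in> Dom" "l < M" for R l
      unfolding Q_def A_def using that degree_U \<open>finite I\<close>
      by (intro degree_sum_le order.trans[OF degree_mult_le] add_mono degree_pseudo_deriv_Lam_expansion)
        (auto simp: Dom_def)
    then show ?thesis by (auto simp: Phi_def Cod_def)
  qed
  moreover have "card Cod < card Dom"
    using card_PiE_poly_funs_less[of "I \<times> {..<N}" M e h] count \<open>finite I\<close>
    by (simp add: Cod_def Dom_def card_cartesian_product mult_ac)
  moreover have "finite Cod"
    by (simp add: Cod_def finite_PiE finite_degree_le)
  ultimately have "\<not> inj_on Phi Dom"
    using card_mono pigeonhole by (metis le_less_trans)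
  then obtain R1 R2 where R12: "R1 \<in> Dom" "R2 \<in> Dom" "R1 \<noteq> R2" "Phi R1 = Phi R2"
    unfolding inj_on_def by blast
  define R where "R x = R1 x - R2 x" for x
  have "A R i = A R1 i - A R2 i" for i
    by (simp add: A_def R_def algebra_simps sum_subtractf)
  then have "(\<Sum>i\<in>I. A R i * F i) = (\<Sum>i\<in>I. A R1 i * F i) - (\<Sum>i\<in>I. A R2 i * F i)"
    by (simp add: left_diff_distrib sum_subtractf)
  moreover have "poly (Q R1 l) = poly (Q R2 l)" if "l < M" for l
    using fun_cong[OF R12(4), of l] that by (simp add: Phi_def)
  ultimately have "\<forall>l<M. \<forall>a. poly (hasse_deriv l (\<Sum>i\<in>I. A R i * F i)) a = 0"
    by (simp add: hasse_deriv_diff hasse)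
  moreover have "\<forall>i\<in>I. \<forall>j<N. degree (R (i, j)) \<le> e"
    using R12(1,2) by (auto simp: R_def Dom_def intro: degree_diff_le)
  moreover have "\<exists>i\<in>I. \<exists>j<N. R (i, j) \<noteq> 0"
  proof -
    have "\<exists>x\<in>I \<times> {..<N}. R1 x \<noteq> R2 x"
      using R12(1-3) PiE_ext unfolding Dom_def by metis
    then show ?thesis by (auto simp: R_def)
  qed
  ultimately show ?thesis unfolding A_def by blast
qed

lemma exists_annihilating_pseudopolys:
  fixes F :: "'b \<Rightarrow> 'a::{finite,field} poly" and U :: "'b \<Rightarrow> nat \<Rightarrow> 'a poly"
  assumes "finite I"
    and twisted: "\<And>i l a. i \<in> I \<Longrightarrow> l < M \<Longrightarrow> poly (hasse_deriv l (F i)) a = r a * poly (U i l) a"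
    and degree_U: "\<And>i l. i \<in> I \<Longrightarrow> l < M \<Longrightarrow> degree (U i l) \<le> h"
    and count: "M * min (e + h + 1) CARD('a) < card I * N * (e + 1)"
    and "e < CARD('a)"
  shows "\<exists>A. (\<forall>i\<in>I. is_pseudopoly e (A i) \<and> degree (A i) < N * CARD('a)) \<and> (\<exists>i\<in>I. A i \<noteq> 0)
           \<and> (\<forall>l<M. \<forall>a. poly (hasse_deriv l (\<Sum>i\<in>I. A i * F i)) a = 0)"
proof -
  obtain R where degree_R: "\<forall>i\<in>I. \<forall>j<N. degree (R (i, j)) \<le> e"
    and nonzero: "\<exists>i\<in>I. \<exists>j<N. R (i, j) \<noteq> 0"
    and vanish: "\<forall>l<M. \<forall>a. poly (hasse_deriv l (\<Sum>i\<in>I. (\<Sum>j<N. Lam ^ j * R (i, j)) * F i)) a = 0"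
    using exists_Lam_digits_annihilating[of I M F r U h e N, OF \<open>finite I\<close> twisted degree_U count]
    by blast
  define A where "A i = (\<Sum>j<N. Lam ^ j * R (i, j))" for i
  have "N > 0" using count by (cases N) simp_all
  have digits: "degree (R (i, j)) < degree (Lam :: 'a poly)" if "i \<in> I" "j < N" for i j
    using degree_R that \<open>e < CARD('a)\<close> by (fastforce simp: degree_Lam)
  have "is_pseudopoly e (A i)" if "i \<in> I" for i
    unfolding A_def using degree_R that by (intro is_pseudopolyI degree_pseudo_deriv_Lam_expansion) auto
  moreover have "degree (A i) < N * CARD('a)" if "i \<in> I" for i
    unfolding A_def using degree_sum_power_mult_less[of N "\<lambda>j. R (i, j)" Lam] digits[OF that] \<open>N > 0\<close>
    by (simp add: degree_Lam)
  moreover have "\<exists>i\<in>I. A i \<noteq> 0"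
  proof -
    obtain i j where "i \<in> I" "j < N" "R (i, j) \<noteq> 0" using nonzero by blast
    then show ?thesis
      unfolding A_def using sum_power_mult_eq_0D[of N "\<lambda>j. R (i, j)" Lam] digits by blast
  qed
  moreover have "\<forall>l<M. \<forall>a. poly (hasse_deriv l (\<Sum>i\<in>I. A i * F i)) a = 0"
    using vanish by (simp add: A_def)
  ultimately show ?thesis by blast
qed

lemma less_mult_diff_if_real_less:
  fixes m c M :: nat
  assumes "m > 0" "real c < (real m - 1) / real m * real M"
  shows "M < m * (M - c)"
proof -
  have "real m * real c + real M < real m * real M"
    using assms by (simp add: field_simps)
  then have "m * c + M < m * M" by (metis of_nat_add of_nat_less_iff of_nat_mult)
  then show ?thesis by (simp add: diff_mult_distrib2)
qed

lemma mult_add_less_if_real_less: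
  fixes m c h M k :: nat
  assumes "m > 0" "real c < (real m - 1) / real m * real M"
    and "real k > real M / ((real m - 1) * real M - real m * real c) * (real h + 1)"
  shows "M * (k + h + 1) < m * (M - c) * k"
proof -
  have "(real m - 1) * real M - real m * real c > 0"
    using assms(1,2) by (simp add: field_simps)
  then have "real M * (real h + 1) < real k * ((real m - 1) * real M - real m * real c)"
    using assms(3) by (simp add: field_simps)
  then have "real M * (real k + real h + 1) + real k * (real m * real c) < real k * (real m * real M)"
    by (simp add: algebra_simps)
  then have "M * (k + h + 1) + k * (m * c) < k * (m * M)"
    by (metis of_nat_add of_nat_less_iff of_nat_mult of_nat_1)
  moreover have "c \<le> M"
    using less_mult_diff_if_real_less[OF assms(1,2)] by (cases "c \<le> M") simp_all
  ultimately show ?thesis by (simp add: diff_mult_distrib2 algebra_simps)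
qed

lemma min_count_less:
  fixes M n k h q :: nat
  assumes "M < n" "M * (k + h + 1) < n * k" "q > 0"
  shows "M * min (min k (q - 1) + h + 1) q < n * (min k (q - 1) + 1)"
proof (cases "k \<le> q - 1")
  case True
  then have "M * min (min k (q - 1) + h + 1) q \<le> M * (k + h + 1)"
    by (intro mult_le_mono2) simp
  also have "\<dots> < n * (k + 1)" using assms(2) by simp
  finally show ?thesis using True by simp
next
  case False
  then show ?thesis using assms(1,3) by simp
qed

theorem lemma5p6:
  fixes F :: "nat \<Rightarrow> 'a::{finite,field} poly"
    and r :: "'a \<Rightarrow> 'a"
    and m c h M k :: nat
  assumes "m > 0" "c > 0" "h > 0" "M > 0"
    and "real c < (real m - 1) / real m * real M"
    and "\<forall>i\<in>{1..m}. degree (F i) < c * CARD('a)"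
    and "\<forall>i\<in>{1..m}. twisted_pseudopoly r h M (F i)"
    and "real k > real M / ((real m - 1) * real M - real m * real c) * (real h + 1)"
  shows "\<exists>A :: nat \<Rightarrow> 'a poly.
           (\<forall>i\<in>{1..m}. is_pseudopoly k (A i) \<and> degree (A i) < M * CARD('a))
         \<and> (\<exists>i\<in>{1..m}. A i \<noteq> 0)
         \<and> (\<Sum>i=1..m. A i * F i) = 0"
proof -
  obtain U where U: "\<And>i l. i \<in> {1..m} \<Longrightarrow> l < M \<Longrightarrow>
      degree (U i l) \<le> h \<and> (\<forall>a. poly (hasse_deriv l (F i)) a = r a * poly (U i l) a)"
    using assms(7) unfolding twisted_pseudopoly_def by metis
  define N e where "N = M - c" and "e = min k (CARD('a) - 1)"
  have slack: "M < m * N" "M * (k + h + 1) < m * N * k"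
    using less_mult_diff_if_real_less[OF assms(1,5)] mult_add_less_if_real_less[OF assms(1,5,8)]
    by (simp_all add: N_def)
  then have NcM: "N + c = M" by (simp add: N_def)
  have "M * min (e + h + 1) CARD('a) < card {1..m} * N * (e + 1)"
    unfolding e_def using slack by (intro min_count_less) simp_all
  moreover have "e < CARD('a)" unfolding e_def using card_field_ge_2[where 'a = 'a] by simp
  ultimately obtain A
    where pseudo: "\<forall>i\<in>{1..m}. is_pseudopoly e (A i) \<and> degree (A i) < N * CARD('a)"
    and nonzero: "\<exists>i\<in>{1..m}. A i \<noteq> 0"
    and vanish: "\<forall>l<M. \<forall>a. poly (hasse_deriv l (\<Sum>i=1..m. A i * F i)) a = 0"
    using exists_annihilating_pseudopolys[of "{1..m}" M F r U h e N] U by auto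
  have "degree (A i * F i) < M * CARD('a)" if "i \<in> {1..m}" for i
    using degree_mult_le[of "A i" "F i"] pseudo assms(6) that
    by (fastforce simp: NcM[symmetric] add_mult_distrib)
  then have "(\<Sum>i=1..m. A i * F i) = 0"
    using vanish assms(4)
    by (intro hasse_derivs_vanish_imp_eq_0[where M = M] degree_sum_less) auto
  moreover have "is_pseudopoly k (A i) \<and> degree (A i) < M * CARD('a)" if "i \<in> {1..m}" for i
    using pseudo that by (fastforce simp: is_pseudopoly_def e_def NcM[symmetric] add_mult_distrib)
  ultimately show ?thesis using nonzero by blast
qed

end
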